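(* For every nonempty finite $W\subseteq\mathbb{N}$ with $l(W)=l$, $$\left(\frac{2l}{2l-1}\right)^{h(W)-1}\le |W|.$$
   Context: $\mathbb{N}=\{0,1,2,\ldots\}$. For a set $W$ of integers, $l(W)$ is the maximum number of consecutive integers contained in $W$. For a finite $L\subseteq\mathbb{N}$ and an integer $r$, write $L+r:=\{x+r: x\in L,\ x+r\ge 0\}$. Define $h$ on finite subsets of $\mathbb{N}$ recursively on $|L|$: $h(\emptyset)=0$, and for $L\neq\emptyset$, $$h(L)=1+\max\Big\{h(L\cap(L+1)),\ \max_{M\in T(L)}\min\{h(L\cap M),\,h(L\cap(M-1))\}\Big\},$$ where $T(L)$ is the set of all finite $M\subseteq\mathbb{N}$ with $M\notin\{L,L+1\}$ and $0<|M|\le|L|$. *)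

theory Defs
  imports Complex_Main
begin

definition shift :: "nat set \<Rightarrow> int \<Rightarrow> nat set" where
  "shift L r = {nat (int x + r) | x. x \<in> L \<and> int x + r \<ge> 0}"

definition lrun :: "nat set \<Rightarrow> nat" where
  "lrun W = Max {k. \<exists>a. {a..<a+k} \<subseteq> W}"

definition Tset :: "nat set \<Rightarrow> nat set set" where
  "Tset L = {M. finite M \<and> M \<noteq> L \<and> M \<noteq> shift L 1 \<and> 0 < card M \<and> card M \<le> card L}"

lemma finite_shift: "finite L \<Longrightarrow> finite (shift L r)"
proof -
  assume "finite L"
  have "shift L r \<subseteq> (\<lambda>x. nat (int x + r)) ` L" unfolding shift_def by auto
  thus ?thesis using \<open>finite L\<close> finite_subset by blast
qed

lemma shift_plus1: "shift L 1 = (\<lambda>x. x + 1) ` L"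
  unfolding shift_def by force

lemma shift_minus1_iff: "x \<in> shift M (-1) \<longleftrightarrow> x + 1 \<in> M"
proof
  assume "x \<in> shift M (-1)"
  then obtain y where "y \<in> M" "int y - 1 \<ge> 0" "x = nat (int y - 1)"
    unfolding shift_def by auto
  hence "y = x + 1" by linarith
  thus "x + 1 \<in> M" using \<open>y \<in> M\<close> by simp
next
  assume "x + 1 \<in> M"
  thus "x \<in> shift M (-1)" unfolding shift_def
    by (intro CollectI exI[of _ "x+1"]) auto
qed

lemma term1: "finite L \<Longrightarrow> L \<noteq> {} \<Longrightarrow> card (L \<inter> shift L 1) < card L"
proof -
  assume f: "finite L" and ne: "L \<noteq> {}"
  have "Min L \<in> L" using f ne by simp
  moreover have "Min L \<notin> shift L 1"
    unfolding shift_plus1 using f Min_le by fastforce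
  ultimately have "L \<inter> shift L 1 \<subset> L" by blast
  thus ?thesis using f psubset_card_mono by blast
qed

lemma term2: "finite L \<Longrightarrow> M \<in> Tset L \<Longrightarrow> card (L \<inter> M) < card L"
proof -
  assume f: "finite L" and M: "M \<in> Tset L"
  have "L \<inter> M \<subset> L"
  proof (rule ccontr)
    assume "\<not> L \<inter> M \<subset> L"
    hence "L \<subseteq> M" by blast
    moreover have "finite M" "card M \<le> card L" using M unfolding Tset_def by auto
    ultimately have "card L = card M" using card_mono by (metis le_antisym)
    hence "L = M" using card_subset_eq \<open>L \<subseteq> M\<close> \<open>finite M\<close> by blast
    thus False using M unfolding Tset_def by blast
  qed
  thus ?thesis using f psubset_card_mono by blast
qed

lemma term3: "finite L \<Longrightarrow> M \<in> Tset L \<Longrightarrow> card (L \<inter> shift M (-1)) < card L"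
proof -
  assume f: "finite L" and M: "M \<in> Tset L"
  have "L \<inter> shift M (-1) \<subset> L"
  proof (rule ccontr)
    assume "\<not> L \<inter> shift M (-1) \<subset> L"
    hence "L \<subseteq> shift M (-1)" by blast
    hence sub: "shift L 1 \<subseteq> M" unfolding shift_plus1 using shift_minus1_iff by blast
    have "card (shift L 1) = card L" unfolding shift_plus1 by (simp add: card_image)
    moreover have "finite M" "card M \<le> card L" using M unfolding Tset_def by auto
    ultimately have "card (shift L 1) = card M" using sub card_mono by (metis le_antisym)
    hence "shift L 1 = M" using card_subset_eq sub \<open>finite M\<close> by blast
    thus False using M unfolding Tset_def by blast
  qed
  thus ?thesis using f psubset_card_mono by blast
qed

text \<open>The function h, defined by recursion on |L| (the recursive calls are on strictly
smaller subsets of L). The value on infinite sets is irrelevant (set to 0).\<close>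
function h :: "nat set \<Rightarrow> nat" where
  "h L = (if L = {} \<or> infinite L then 0 else
     1 + Max (insert (h (L \<inter> shift L 1))
                ((\<lambda>M. min (h (L \<inter> M)) (h (L \<inter> shift M (-1)))) ` Tset L)))"
  by auto
termination
  apply (relation "measure card")
  apply (auto intro: term1 term2 term3)
  done

end

theory Submission
  imports Defs
begin

(*
  Write L' = L \<inter> (L+1) for the elements of L whose predecessor is also in L, and
  r(l) = 2l/(2l-1).  The proof is a strong induction on |W| with the fixed ratio
  r = r(l(W)); subsets A of W have l(A) \<le> l(W), hence r(l(A)) \<ge> r, so the induction
  hypothesis may always be used with the ratio of W.  Two counting facts drive it:
   (1) every element of L lies in a run of consecutive elements starting at an element
       of L - L', and runs have length at most l(L), so |L| \<le> l(L) * |L - L'|;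
   (2) for any finite M, |L \<inter> M| + |L \<inter> (M-1)| \<le> |M| + |L'|.
  If h(W) \<ge> 2, the recursion for h gives either h(W) = 1 + h(W') or
  h(W) = 1 + min(h(W \<inter> M), h(W \<inter> (M-1))) with |M| \<le> |W|; in both cases the induction
  hypothesis and (2) give r^(h(W)-2) \<le> (|W| + |W'|)/2, and (1) turns this into
  r^(h(W)-1) \<le> |W| by an elementary inequality for r(l).
*)

declare h.simps[simp del]

lemma mem_shift1: "x \<in> shift L 1 \<longleftrightarrow> 0 < x \<and> x - 1 \<in> L"
  unfolding shift_plus1 by (cases x) auto

lemma h_empty: "h {} = 0"
  by (subst h.simps) simp

text \<open>The candidate set is finite because all its
  values are of the form min (h A) (h B) with A, B subsets of L.\<close>
lemma h_unfold_cases: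
  assumes fin: "finite L" and ne: "L \<noteq> {}"
  obtains "h L = Suc (h (L \<inter> shift L 1))"
  | M where "M \<in> Tset L" "h L = Suc (min (h (L \<inter> M)) (h (L \<inter> shift M (-1))))"
proof -
  define X where "X = insert (h (L \<inter> shift L 1))
                ((\<lambda>M. min (h (L \<inter> M)) (h (L \<inter> shift M (-1)))) ` Tset L)"
  have hL: "h L = Suc (Max X)"
    unfolding X_def using fin ne by (subst h.simps) simp
  have "X \<subseteq> insert (h (L \<inter> shift L 1)) ((\<lambda>(A, B). min (h A) (h B)) ` (Pow L \<times> Pow L))"
    unfolding X_def by (auto intro!: image_eqI[of _ _ "(L \<inter> _, L \<inter> shift _ (-1))"])
  then have "finite X"
    using fin by (meson finite_Pow_iff finite_SigmaI finite_imageI finite_insert finite_subset)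
  then have "Max X \<in> X"
    by (intro Max_in) (auto simp: X_def)
  then show thesis
    using hL that unfolding X_def by auto
qed

lemma runs_finite: "finite (L :: nat set) \<Longrightarrow> finite {k. \<exists>a. {a..<a+k} \<subseteq> L}"
proof -
  assume fin: "finite L"
  have "{k. \<exists>a. {a..<a+k} \<subseteq> L} \<subseteq> {..card L}"
  proof
    fix k assume "k \<in> {k. \<exists>a. {a..<a+k} \<subseteq> L}"
    then obtain a where "{a..<a+k} \<subseteq> L" by auto
    then have "card {a..<a+k} \<le> card L" using fin card_mono by blast
    then show "k \<in> {..card L}" by simp
  qed
  then show ?thesis using finite_subset by blast
qed

lemma lrun_ge: "finite L \<Longrightarrow> {a..<a+k} \<subseteq> L \<Longrightarrow> k \<le> lrun L"
  unfolding lrun_def by (rule Max_ge) (auto simp: runs_finite)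

lemma lrun_pos: "finite L \<Longrightarrow> L \<noteq> {} \<Longrightarrow> 1 \<le> lrun L"
  using lrun_ge[of L _ 1] by fastforce

lemma lrun_mono: "finite B \<Longrightarrow> A \<subseteq> B \<Longrightarrow> lrun A \<le> lrun B"
proof -
  assume "finite B" "A \<subseteq> B"
  have "{0..<0+0} \<subseteq> A" by simp
  then have nonempty: "{k. \<exists>a. {a..<a+k} \<subseteq> A} \<noteq> {}" by blast
  have "{k. \<exists>a. {a..<a+k} \<subseteq> A} \<subseteq> {k. \<exists>a. {a..<a+k} \<subseteq> B}"
    using \<open>A \<subseteq> B\<close> by blast
  then show ?thesis
    unfolding lrun_def using nonempty runs_finite[OF \<open>finite B\<close>] by (rule Max_mono)
qed

lemma run_start_below:
  "x \<in> L \<Longrightarrow> \<exists>s \<in> L - shift L 1. s \<le> x \<and> {s..x} \<subseteq> L"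
proof (induction x)
  case 0
  then show ?case by (auto simp: mem_shift1)
next
  case (Suc n)
  show ?case
  proof (cases "Suc n \<in> shift L 1")
    case True
    then have "n \<in> L" by (simp add: mem_shift1)
    with Suc.IH obtain s where "s \<in> L - shift L 1" "s \<le> n" "{s..n} \<subseteq> L" by auto
    moreover have "{s..Suc n} = insert (Suc n) {s..n}" using \<open>s \<le> n\<close> by auto
    ultimately show ?thesis using Suc.prems by (intro bexI[of _ s]) auto
  next
    case False
    then show ?thesis using Suc.prems by auto
  qed
qed

text \<open>Counting fact (1): L is covered by the runs of length l(L) that begin at the
  run starts, so |L| \<le> l(L) * (number of run starts).\<close>
lemma card_le_lrun_run_starts:
  assumes fin: "finite L"
  shows "card L \<le> lrun L * card (L - shift L 1)"
proof -
  define S where "S = L - shift L 1"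
  have cover: "L \<subseteq> (\<Union>s\<in>S. {s..<s + lrun L})"
  proof
    fix x assume "x \<in> L"
    then obtain s where s: "s \<in> S" "s \<le> x" "{s..x} \<subseteq> L"
      using run_start_below S_def by blast
    have "{s..<s + (Suc x - s)} = {s..x}" using s(2) by auto
    then have "Suc x - s \<le> lrun L" using lrun_ge[OF fin] s(3) by metis
    then show "x \<in> (\<Union>s\<in>S. {s..<s + lrun L})" using s by auto
  qed
  have "finite S" using fin S_def by auto
  then have "card L \<le> card (\<Union>s\<in>S. {s..<s + lrun L})"
    using cover by (intro card_mono) auto
  also have "\<dots> \<le> (\<Sum>s\<in>S. card {s..<s + lrun L})"
    using \<open>finite S\<close> by (rule card_UN_le)
  also have "\<dots> = lrun L * card S" by simp
  finally show ?thesis unfolding S_def .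
qed

text \<open>Counting fact (2): L \<inter> (M-1) is the shift by -1 of (L+1) \<inter> M, and
  L \<inter> M, (L+1) \<inter> M are subsets of M whose intersection lies in L \<inter> (L+1).\<close>
lemma overlap_bound:
  assumes fin: "finite L" and finM: "finite M"
  shows "card (L \<inter> M) + card (L \<inter> shift M (-1)) \<le> card M + card (L \<inter> shift L 1)"
proof -
  have "L \<inter> shift M (-1) \<subseteq> (\<lambda>x. x - 1) ` (shift L 1 \<inter> M)"
  proof
    fix x assume "x \<in> L \<inter> shift M (-1)"
    then have "x + 1 \<in> shift L 1 \<inter> M" by (auto simp: shift_minus1_iff mem_shift1)
    then show "x \<in> (\<lambda>x. x - 1) ` (shift L 1 \<inter> M)" by (intro image_eqI[of _ _ "x + 1"]) auto
  qed
  then have "card (L \<inter> shift M (-1)) \<le> card (shift L 1 \<inter> M)"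
    using finM by (meson card_image_le finite_Int card_mono finite_imageI order_trans)
  moreover have "card (L \<inter> M) + card (shift L 1 \<inter> M) =
      card ((L \<inter> M) \<union> (shift L 1 \<inter> M)) + card ((L \<inter> M) \<inter> (shift L 1 \<inter> M))"
    using finM by (intro card_Un_Int) auto
  moreover have "card ((L \<inter> M) \<union> (shift L 1 \<inter> M)) \<le> card M"
    using finM by (intro card_mono) auto
  moreover have "card ((L \<inter> M) \<inter> (shift L 1 \<inter> M)) \<le> card (L \<inter> shift L 1)"
    using fin by (intro card_mono) auto
  ultimately show ?thesis by linarith
qed

definition ratio :: "nat \<Rightarrow> real" where
  "ratio l = 2 * real l / (2 * real l - 1)"

lemma ratio_ge_1: "1 \<le> l \<Longrightarrow> 1 \<le> ratio l"
  unfolding ratio_def by (simp add: field_simps)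

lemma ratio_antimono: "1 \<le> k \<Longrightarrow> k \<le> l \<Longrightarrow> ratio l \<le> ratio k"
  unfolding ratio_def by (simp add: divide_simps algebra_simps)

text \<open>Passing to a nonempty subset can only increase the ratio, which is what lets
  the induction run with the ratio of the whole set.\<close>
lemma ratio_power_subset:
  assumes "finite W" "A \<subseteq> W" "A \<noteq> {}"
  shows "ratio (lrun W) ^ k \<le> ratio (lrun A) ^ k"
proof -
  have "finite A" using assms finite_subset by blast
  then have "1 \<le> lrun A" using lrun_pos assms(3) by blast
  moreover have "lrun A \<le> lrun W" using lrun_mono assms(1,2) by blast
  ultimately have "ratio (lrun W) \<le> ratio (lrun A)" "1 \<le> ratio (lrun W)"
    using ratio_antimono ratio_ge_1 by auto
  then show ?thesis by (intro power_mono) auto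
qed

lemma ratio_step:
  fixes n c :: real
  assumes "1 \<le> l" and "n \<le> real l * (n - c)"
  shows "ratio l * ((n + c) / 2) \<le> n"
proof -
  have pos: "0 < 2 * real l - 1" using assms(1) by simp
  have "real l * (n + c) \<le> (2 * real l - 1) * n"
    using assms(2) by (simp add: algebra_simps)
  then show ?thesis
    unfolding ratio_def using pos by (simp add: divide_simps algebra_simps)
qed

lemma ratio_power_h_le_card:
  assumes "finite W" "W \<noteq> {}"
  shows "ratio (lrun W) ^ (h W - 1) \<le> real (card W)"
  using assms
proof (induction "card W" arbitrary: W rule: less_induct)
  case less
  note fin = less.prems(1) and ne = less.prems(2)
  define r where "r = ratio (lrun W)"
  define W' where "W' = W \<inter> shift W 1"
  have W'_le: "card W' \<le> card W" using fin unfolding W'_def by (simp add: card_mono)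
  have "1 \<le> lrun W" using lrun_pos fin ne by blast
  then have r_ge_1: "1 \<le> r" using ratio_ge_1 r_def by blast
  have IH: "r ^ (h A - 1) \<le> card A" if "A \<subseteq> W" "card A < card W" "1 \<le> h A" for A
  proof -
    have "A \<noteq> {}" using that(3) h_empty by auto
    then show ?thesis
      using less.hyps[OF that(2)] ratio_power_subset[OF fin that(1)] finite_subset[OF that(1) fin]
      unfolding r_def by (meson order_trans)
  qed
  show ?case
  proof (cases "h W \<le> 1")
    case True
    then show ?thesis using fin ne by (simp add: Suc_le_eq card_gt_0_iff)
  next
    case False
    have half: "r ^ (h W - 2) \<le> (real (card W) + card W') / 2"
    proof (cases rule: h_unfold_cases[OF fin ne])
      case 1
      then have "r ^ (h W - 2) \<le> card W'"
        using IH[of W'] False term1[OF fin ne] unfolding W'_def by auto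
      then show ?thesis using W'_le by (simp add: field_simps)
    next
      case (2 M)
      define A B where "A = W \<inter> M" and "B = W \<inter> shift M (-1)"
      have "h W - 2 \<le> h A - 1" "h W - 2 \<le> h B - 1" "1 \<le> h A" "1 \<le> h B"
        using 2(2) False unfolding A_def B_def by auto
      moreover have "card A < card W" "card B < card W"
        using term2[OF fin 2(1)] term3[OF fin 2(1)] unfolding A_def B_def by auto
      ultimately have hA: "r ^ (h W - 2) \<le> card A" and hB: "r ^ (h W - 2) \<le> card B"
        using IH[of A] IH[of B] power_increasing[OF _ r_ge_1] unfolding A_def B_def
        by (meson inf_le1 order_trans)+
      have "finite M" "card M \<le> card W" using 2(1) unfolding Tset_def by auto
      then have "card A + card B \<le> card W + card W'"
        using overlap_bound[OF fin] unfolding A_def B_def W'_def by (meson add_le_mono1 order_trans)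
      then show ?thesis using hA hB by (simp add: field_simps)
    qed
    have "card (W - shift W 1) = card W - card W'"
      unfolding W'_def using fin by (simp add: card_Diff_subset_Int)
    then have "real (card W) \<le> real (lrun W * (card W - card W'))"
      using card_le_lrun_run_starts[OF fin] by (simp only: of_nat_le_iff)
    also have "\<dots> = real (lrun W) * (real (card W) - real (card W'))"
      using W'_le by (simp add: of_nat_diff)
    finally have step: "r * ((real (card W) + card W') / 2) \<le> card W"
      using ratio_step \<open>1 \<le> lrun W\<close> unfolding r_def by blast
    have "h W - 1 = Suc (h W - 2)" using False by simp
    then have "r ^ (h W - 1) = r * r ^ (h W - 2)" by simp
    also have "\<dots> \<le> r * ((real (card W) + card W') / 2)"
      using half r_ge_1 by (intro mult_left_mono) auto
    also have "\<dots> \<le> card W" by (rule step)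
    finally show ?thesis unfolding r_def .
  qed
qed

theorem mainTheorem6:
  fixes W :: "nat set" and l :: nat
  assumes "finite W" and "W \<noteq> {}" and "lrun W = l"
  shows "((2 * real l) / (2 * real l - 1)) ^ (h W - 1) \<le> real (card W)"
  using ratio_power_h_le_card[OF assms(1,2)] assms(3) unfolding ratio_def by simp

end
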